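(* Fix an integer $S\ge 1$ and let $X$ be a standard Gaussian random variable. There exists $\tilde\beta>0$ such that for all $0\le\beta<\tilde\beta$, all $h\ge 0$ and all $D\in\mathbb{R}$, the system of two equations in the unknowns $(p,q)$ (with $q\ge 0$) \[ p=\mathbb{E}\left[\frac{\sum_{\gamma=1}^{S}\gamma^2\cdot 2\cosh\left[\gamma(\sqrt{q}\beta X+h)\right]\exp\left(\gamma^2\left[D+\tfrac{\beta^2}{2}(p-q)\right]\right)}{1+\sum_{\gamma=1}^{S}2\cosh\left[\gamma(\sqrt{q}\beta X+h)\right]\exp\left(\gamma^2\left[D+\tfrac{\beta^2}{2}(p-q)\right]\right)}\right], \] \[ q=\mathbb{E}\left[\left(\frac{\sum_{\gamma=1}^{S}\gamma\cdot 2\sinh\left[\gamma(\sqrt{q}\beta X+h)\right]\exp\left(\gamma^2\left[D+\tfrac{\beta^2}{2}(p-q)\right]\right)}{1+\sum_{\gamma=1}^{S}2\cosh\left[\gamma(\sqrt{q}\beta X+h)\right]\exp\left(\gamma^2\left[D+\tfrac{\beta^2}{2}(p-q)\right]\right)}\right)^2\right] \] has a unique solution. *)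

theory Defs
  imports "HOL-Probability.Probability"
begin

definition gauss_expect :: "(real \<Rightarrow> real) \<Rightarrow> real" where
  "gauss_expect g = (\<integral>x. g x \<partial>(density lborel std_normal_density))"

definition ew :: "real \<Rightarrow> real \<Rightarrow> real \<Rightarrow> real \<Rightarrow> nat \<Rightarrow> real" where
  "ew \<beta> D p q \<gamma> = exp ((real \<gamma>)^2 * (D + \<beta>^2 / 2 * (p - q)))"

definition denom :: "nat \<Rightarrow> real \<Rightarrow> real \<Rightarrow> real \<Rightarrow> real \<Rightarrow> real \<Rightarrow> real \<Rightarrow> real" where
  "denom S \<beta> h D p q x = 1 + (\<Sum>\<gamma>=1..S. 2 * cosh (real \<gamma> * (sqrt q * \<beta> * x + h)) * ew \<beta> D p q \<gamma>)"

definition numP :: "nat \<Rightarrow> real \<Rightarrow> real \<Rightarrow> real \<Rightarrow> real \<Rightarrow> real \<Rightarrow> real \<Rightarrow> real" where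
  "numP S \<beta> h D p q x = (\<Sum>\<gamma>=1..S. (real \<gamma>)^2 * (2 * cosh (real \<gamma> * (sqrt q * \<beta> * x + h))) * ew \<beta> D p q \<gamma>)"

definition numQ :: "nat \<Rightarrow> real \<Rightarrow> real \<Rightarrow> real \<Rightarrow> real \<Rightarrow> real \<Rightarrow> real \<Rightarrow> real" where
  "numQ S \<beta> h D p q x = (\<Sum>\<gamma>=1..S. real \<gamma> * (2 * sinh (real \<gamma> * (sqrt q * \<beta> * x + h))) * ew \<beta> D p q \<gamma>)"

end

(*
  Write the two right-hand sides as Gibbs means over spins k in {-S..S} with weights
  exp (k y + k^2 T), where y = sqrt q * beta * X + h and T = D + beta^2 / 2 * (p - q).
  In the coordinates (p, r) with r = sqrt q they define a map of the box [0, S^2] x [0, S]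
  into itself.  A Gibbs mean is Lipschitz in y and T, because its derivative is a covariance
  of bounded quantities; since y and T move by O(beta) when (p, r) moves, and E[X^2] = 1
  controls the Gaussian averages (through the L^2 triangle inequality for the second
  component), the map is a contraction with constant O(S^5 beta).  For small beta, Banach's
  fixed point theorem gives exactly one solution.
*)

theory Submission
  imports Defs
begin

section \<open>Gibbs means\<close>

definition gibbs_mean :: "'k set \<Rightarrow> ('k \<Rightarrow> real) \<Rightarrow> ('k \<Rightarrow> real) \<Rightarrow> real" where
  "gibbs_mean K H f = (\<Sum>k\<in>K. f k * exp (H k)) / (\<Sum>k\<in>K. exp (H k))"

lemma partition_function_pos:
  "finite K \<Longrightarrow> K \<noteq> {} \<Longrightarrow> (\<Sum>k\<in>K. exp (H k :: real)) > 0"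
  by (simp add: sum_pos)

lemma gibbs_mean_abs_le:
  assumes "finite K" "K \<noteq> {}" and "\<And>k. k \<in> K \<Longrightarrow> \<bar>f k\<bar> \<le> F"
  shows "\<bar>gibbs_mean K H f\<bar> \<le> F"
proof -
  have "\<bar>\<Sum>k\<in>K. f k * exp (H k)\<bar> \<le> (\<Sum>k\<in>K. \<bar>f k\<bar> * exp (H k))"
    by (rule order_trans[OF sum_abs]) (simp add: abs_mult)
  also have "\<dots> \<le> (\<Sum>k\<in>K. F * exp (H k))"
    using assms(3) by (intro sum_mono mult_right_mono) auto
  finally show ?thesis
    using partition_function_pos[OF assms(1,2), of H]
    by (simp add: gibbs_mean_def abs_div pos_divide_le_eq sum_distrib_left)
qed

lemma gibbs_mean_nonneg:
  "(\<And>k. k \<in> K \<Longrightarrow> f k \<ge> 0) \<Longrightarrow> gibbs_mean K H f \<ge> 0"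
  unfolding gibbs_mean_def by (intro divide_nonneg_nonneg sum_nonneg) auto

lemma gibbs_mean_has_derivative:
  assumes "finite K" "K \<noteq> {}"
  shows "((\<lambda>s. gibbs_mean K (\<lambda>k. c k * s + d k) f) has_real_derivative
      gibbs_mean K (\<lambda>k. c k * s + d k) (\<lambda>k. f k * c k)
      - gibbs_mean K (\<lambda>k. c k * s + d k) f * gibbs_mean K (\<lambda>k. c k * s + d k) c) (at s)"
proof -
  define Z where "Z = (\<Sum>k\<in>K. exp (c k * s + d k))"
  have Z: "Z > 0" unfolding Z_def by (rule partition_function_pos[OF assms])
  have deriv: "((\<lambda>s. gibbs_mean K (\<lambda>k. c k * s + d k) f) has_real_derivative
      ((\<Sum>k\<in>K. f k * (exp (c k * s + d k) * c k)) * Z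
        - (\<Sum>k\<in>K. f k * exp (c k * s + d k)) * (\<Sum>k\<in>K. exp (c k * s + d k) * c k)) / (Z * Z)) (at s)"
    unfolding gibbs_mean_def Z_def using Z[unfolded Z_def]
    by (auto intro!: derivative_eq_intros simp: ac_simps)
  have "((\<Sum>k\<in>K. f k * (exp (c k * s + d k) * c k)) * Z
        - (\<Sum>k\<in>K. f k * exp (c k * s + d k)) * (\<Sum>k\<in>K. exp (c k * s + d k) * c k)) / (Z * Z)
      = gibbs_mean K (\<lambda>k. c k * s + d k) (\<lambda>k. f k * c k)
      - gibbs_mean K (\<lambda>k. c k * s + d k) f * gibbs_mean K (\<lambda>k. c k * s + d k) c"
    unfolding gibbs_mean_def Z_def[symmetric] using Z
    by (simp add: field_simps power2_eq_square ac_simps)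
  with deriv show ?thesis by simp
qed

lemma gibbs_mean_lipschitz:
  assumes K: "finite K" "K \<noteq> {}"
    and f: "\<And>k. k \<in> K \<Longrightarrow> \<bar>f k\<bar> \<le> F" and c: "\<And>k. k \<in> K \<Longrightarrow> \<bar>c k\<bar> \<le> C"
  shows "\<bar>gibbs_mean K (\<lambda>k. c k * s + d k) f - gibbs_mean K (\<lambda>k. c k * t + d k) f\<bar>
    \<le> 2 * F * C * \<bar>s - t\<bar>"
proof -
  obtain k0 where "k0 \<in> K" using K by blast
  then have "F \<ge> 0" using f[of k0] by linarith
  have fc: "\<bar>f k * c k\<bar> \<le> F * C" if "k \<in> K" for k
    unfolding abs_mult using f c that \<open>F \<ge> 0\<close> by (intro mult_mono) auto
  have "\<bar>gibbs_mean K (\<lambda>k. c k * s + d k) (\<lambda>k. f k * c k)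
      - gibbs_mean K (\<lambda>k. c k * s + d k) f * gibbs_mean K (\<lambda>k. c k * s + d k) c\<bar> \<le> 2 * F * C"
    (is "\<bar>?f' s\<bar> \<le> _") for s
  proof -
    have "\<bar>gibbs_mean K (\<lambda>k. c k * s + d k) f * gibbs_mean K (\<lambda>k. c k * s + d k) c\<bar> \<le> F * C"
      unfolding abs_mult using \<open>F \<ge> 0\<close> by (intro mult_mono gibbs_mean_abs_le K f c) auto
    moreover have "\<bar>gibbs_mean K (\<lambda>k. c k * s + d k) (\<lambda>k. f k * c k)\<bar> \<le> F * C"
      by (intro gibbs_mean_abs_le K fc)
    ultimately show ?thesis by linarith
  qed
  with gibbs_mean_has_derivative[OF K] show ?thesis
    by (intro field_differentiable_bound[OF convex_UNIV, where f' = ?f', simplified]) auto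
qed

section \<open>Square-integrable functions\<close>

lemma le_sqrt_mult_if_quadratic_nonneg:
  fixes a b c :: real
  assumes "a \<ge> 0" and nonneg: "\<And>t. 0 \<le> a * t^2 - 2 * c * t + b"
  shows "c \<le> sqrt a * sqrt b"
proof (cases "a = 0")
  case True
  have "c \<le> 0"
  proof (rule ccontr)
    assume "\<not> c \<le> 0"
    with nonneg[of "(b + 1) / (2 * c)"] True show False by (simp add: field_simps)
  qed
  then show ?thesis using \<open>a \<ge> 0\<close> nonneg[of 0] by (simp add: order_trans[OF _ mult_nonneg_nonneg])
next
  case False
  with \<open>a \<ge> 0\<close> have "a > 0" by simp
  have "0 \<le> a * (c / a)^2 - 2 * c * (c / a) + b" by (rule nonneg)
  with \<open>a > 0\<close> have "c^2 \<le> a * b" by (simp add: field_simps power2_eq_square)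
  then have "\<bar>c\<bar> \<le> sqrt (a * b)" using real_le_rsqrt real_sqrt_abs by (metis real_sqrt_le_mono)
  then show ?thesis by (simp add: real_sqrt_mult)
qed

lemma
  fixes f g :: "'a \<Rightarrow> real"
  assumes [measurable]: "f \<in> borel_measurable M" "g \<in> borel_measurable M"
    and f2: "integrable M (\<lambda>x. (f x)^2)" and g2: "integrable M (\<lambda>x. (g x)^2)"
  shows integrable_mult_if_square_integrable: "integrable M (\<lambda>x. f x * g x)"
    and Cauchy_Schwarz_integral: "(\<integral>x. f x * g x \<partial>M) \<le> sqrt (\<integral>x. (f x)^2 \<partial>M) * sqrt (\<integral>x. (g x)^2 \<partial>M)"
proof -
  show fg: "integrable M (\<lambda>x. f x * g x)"
  proof (rule Bochner_Integration.integrable_bound[OF Bochner_Integration.integrable_add[OF f2 g2]])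
    show "AE x in M. norm (f x * g x) \<le> norm ((f x)^2 + (g x)^2)"
    proof (rule AE_I2)
      fix x
      have "2 * \<bar>f x\<bar> * \<bar>g x\<bar> \<le> (f x)^2 + (g x)^2"
        using sum_squares_bound[of "\<bar>f x\<bar>" "\<bar>g x\<bar>"] by simp
      moreover have "0 \<le> \<bar>f x\<bar> * \<bar>g x\<bar>" by simp
      ultimately show "norm (f x * g x) \<le> norm ((f x)^2 + (g x)^2)"
        unfolding real_norm_def abs_mult by (simp only: abs_of_nonneg[OF sum_squares_ge_zero])
    qed
  qed simp
  show "(\<integral>x. f x * g x \<partial>M) \<le> sqrt (\<integral>x. (f x)^2 \<partial>M) * sqrt (\<integral>x. (g x)^2 \<partial>M)"
  proof (rule le_sqrt_mult_if_quadratic_nonneg)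
    show "0 \<le> (\<integral>x. (f x)^2 \<partial>M)" by simp
    fix t
    have "0 \<le> (\<integral>x. (t * f x - g x)^2 \<partial>M)" by simp
    also have "\<dots> = (\<integral>x. t^2 * (f x)^2 - 2 * t * (f x * g x) + (g x)^2 \<partial>M)"
      by (simp add: power2_eq_square algebra_simps)
    also have "\<dots> = (\<integral>x. (f x)^2 \<partial>M) * t^2 - 2 * (\<integral>x. f x * g x \<partial>M) * t + (\<integral>x. (g x)^2 \<partial>M)"
      using f2 g2 fg by simp
    finally show "0 \<le> (\<integral>x. (f x)^2 \<partial>M) * t^2 - 2 * (\<integral>x. f x * g x \<partial>M) * t + (\<integral>x. (g x)^2 \<partial>M)" .
  qed
qed

lemma sqrt_integral_square_diff_le:
  fixes f g :: "'a \<Rightarrow> real"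
  assumes [measurable]: "f \<in> borel_measurable M" "g \<in> borel_measurable M"
    and f2: "integrable M (\<lambda>x. (f x)^2)" and g2: "integrable M (\<lambda>x. (g x)^2)"
  shows "\<bar>sqrt (\<integral>x. (f x)^2 \<partial>M) - sqrt (\<integral>x. (g x)^2 \<partial>M)\<bar> \<le> sqrt (\<integral>x. (f x - g x)^2 \<partial>M)"
proof -
  define a where "a = (\<integral>x. (f x)^2 \<partial>M)"
  define b where "b = (\<integral>x. (g x)^2 \<partial>M)"
  have "a \<ge> 0" "b \<ge> 0" unfolding a_def b_def by simp_all
  have fg: "integrable M (\<lambda>x. f x * g x)"
    by (rule integrable_mult_if_square_integrable[OF assms])
  have "(sqrt a - sqrt b)^2 = a - 2 * (sqrt a * sqrt b) + b"
    using \<open>a \<ge> 0\<close> \<open>b \<ge> 0\<close> by (simp add: power2_diff)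
  also have "\<dots> \<le> a - 2 * (\<integral>x. f x * g x \<partial>M) + b"
    using Cauchy_Schwarz_integral[OF assms] unfolding a_def b_def by simp
  also have "\<dots> = (\<integral>x. (f x)^2 - 2 * (f x * g x) + (g x)^2 \<partial>M)"
    unfolding a_def b_def using f2 g2 fg by simp
  also have "\<dots> = (\<integral>x. (f x - g x)^2 \<partial>M)"
    by (simp add: power2_diff algebra_simps)
  finally show ?thesis
    unfolding a_def[symmetric] b_def[symmetric] by (simp add: real_le_rsqrt)
qed

section \<open>Unique fixed points\<close>

lemma ex1_fixed_point_if_contraction_into:
  fixes f :: "'a::metric_space \<Rightarrow> 'a"
  assumes "Topological_Spaces.complete B" "B \<noteq> {}" "range f \<subseteq> B" "0 \<le> c" "c < 1"
    and "\<And>x y. x \<in> B \<Longrightarrow> y \<in> B \<Longrightarrow> dist (f x) (f y) \<le> c * dist x y"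
  shows "\<exists>!x. f x = x"
proof -
  have "\<exists>!x\<in>B. f x = x"
    using assms(3) by (intro Banach_fix[OF assms(1,2,4,5)] assms(6)) auto
  moreover have "x \<in> B" if "f x = x" for x
    using assms(3) that by (metis rangeI subsetD)
  ultimately show ?thesis by blast
qed

lemma ex1_fixed_point_sqrt_reparametrisation:
  fixes \<Phi> :: "'a \<times> real \<Rightarrow> 'a \<times> real"
  assumes "\<exists>!z. \<Phi> z = z" and "\<And>z. snd (\<Phi> z) \<ge> 0"
  shows "\<exists>!(p, q). 0 \<le> q \<and> \<Phi> (p, sqrt q) = (p, sqrt q)"
proof -
  obtain p r where fixed: "\<Phi> (p, r) = (p, r)" and unique: "\<And>z. \<Phi> z = z \<Longrightarrow> z = (p, r)"
    using assms(1) by (metis surj_pair)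
  have "r \<ge> 0" using assms(2)[of "(p, r)"] fixed by simp
  show ?thesis
  proof (rule ex1I[of _ "(p, r^2)"])
    show "case (p, r^2) of (p, q) \<Rightarrow> 0 \<le> q \<and> \<Phi> (p, sqrt q) = (p, sqrt q)"
      using fixed \<open>r \<ge> 0\<close> by simp
    fix z :: "'a \<times> real"
    assume z: "case z of (p, q) \<Rightarrow> 0 \<le> q \<and> \<Phi> (p, sqrt q) = (p, sqrt q)"
    obtain p' q' where "z = (p', q')" by (cases z)
    with z have "0 \<le> q'" and "(p', sqrt q') = (p, r)" using unique by auto
    then show "z = (p, r^2)" using \<open>z = (p', q')\<close> by auto
  qed
qed

section \<open>Gaussian expectations\<close>

abbreviation std_normal :: "real measure" where
  "std_normal \<equiv> density lborel std_normal_density"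

lemma prob_space_std_normal: "prob_space std_normal"
  by (rule prob_space_normal_density) simp

lemma integrable_std_normal_bounded:
  fixes g :: "real \<Rightarrow> real"
  assumes "g \<in> borel_measurable borel" "\<And>x. \<bar>g x\<bar> \<le> B"
  shows "integrable std_normal g"
proof -
  interpret prob_space std_normal by (rule prob_space_std_normal)
  show ?thesis using assms by (intro integrable_const_bound[where B=B]) auto
qed

lemma has_bochner_integral_std_normal_square: "has_bochner_integral std_normal (\<lambda>x. x^2) 1"
proof -
  have "has_bochner_integral lborel (\<lambda>x. std_normal_density x * x ^ (2 * 1)) (fact (2 * 1) / (2^1 * fact 1))"
    by (rule std_normal_moment_even)
  then show ?thesis by (intro has_bochner_integral_density) auto
qed

lemma
  shows integrable_std_normal_quadratic: "integrable std_normal (\<lambda>x. a + b * x^2)"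
    and gauss_expect_quadratic: "gauss_expect (\<lambda>x. a + b * x^2) = a + b"
proof -
  interpret prob_space std_normal by (rule prob_space_std_normal)
  have "integrable std_normal (\<lambda>x. x^2)" "(\<integral>x. x^2 \<partial>std_normal) = 1"
    using has_bochner_integral_std_normal_square by (auto simp: has_bochner_integral_iff)
  then show "integrable std_normal (\<lambda>x. a + b * x^2)" "gauss_expect (\<lambda>x. a + b * x^2) = a + b"
    using prob_space by (simp_all add: gauss_expect_def)
qed

lemma gauss_expect_le_quadratic:
  "integrable std_normal f \<Longrightarrow> (\<And>x. f x \<le> a + b * x^2) \<Longrightarrow> gauss_expect f \<le> a + b"
  using integral_mono[OF _ integrable_std_normal_quadratic, of f a b]
  unfolding gauss_expect_def[symmetric] gauss_expect_quadratic by blast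

lemma gauss_expect_diff_le:
  assumes "integrable std_normal f" "integrable std_normal g"
    and diff: "\<And>x. \<bar>f x - g x\<bar> \<le> K * (1 + \<bar>x\<bar>)"
  shows "\<bar>gauss_expect f - gauss_expect g\<bar> \<le> 2 * K"
proof -
  have "\<bar>gauss_expect f - gauss_expect g\<bar> = \<bar>gauss_expect (\<lambda>x. f x - g x)\<bar>"
    using assms by (simp add: gauss_expect_def)
  also have "\<dots> \<le> gauss_expect (\<lambda>x. \<bar>f x - g x\<bar>)"
    unfolding gauss_expect_def by (rule integral_abs_bound)
  also have "\<dots> \<le> 3/2 * K + K/2"
  proof (rule gauss_expect_le_quadratic)
    show "integrable std_normal (\<lambda>x. \<bar>f x - g x\<bar>)" using assms by simp
    fix x :: real
    have "K \<ge> 0" using diff[of 0] by simp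
    moreover have "2 * \<bar>x\<bar> \<le> 1 + x^2" using sum_squares_bound[of "\<bar>x\<bar>" 1] by simp
    ultimately have "K * (1 + \<bar>x\<bar>) \<le> K * (3/2 + x^2 / 2)" by (intro mult_left_mono) auto
    with diff[of x] show "\<bar>f x - g x\<bar> \<le> 3/2 * K + K/2 * x^2" by (simp add: algebra_simps)
  qed
  finally show ?thesis by simp
qed

lemma gauss_rms_diff_le:
  assumes [measurable]: "f \<in> borel_measurable borel" "g \<in> borel_measurable borel"
    and "\<And>x. \<bar>f x\<bar> \<le> B" "\<And>x. \<bar>g x\<bar> \<le> B"
    and diff: "\<And>x. \<bar>f x - g x\<bar> \<le> K * (1 + \<bar>x\<bar>)"
  shows "\<bar>sqrt (gauss_expect (\<lambda>x. (f x)^2)) - sqrt (gauss_expect (\<lambda>x. (g x)^2))\<bar> \<le> 2 * K"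
proof -
  have square_bound: "\<bar>u^2\<bar> \<le> M^2" if "\<bar>u\<bar> \<le> M" for u M :: real
    using power_mono[OF that abs_ge_zero, of 2] by simp
  have "integrable std_normal (\<lambda>x. (f x)^2)" "integrable std_normal (\<lambda>x. (g x)^2)"
    using assms(3,4) by (auto intro!: integrable_std_normal_bounded square_bound)
  then have "\<bar>sqrt (gauss_expect (\<lambda>x. (f x)^2)) - sqrt (gauss_expect (\<lambda>x. (g x)^2))\<bar>
      \<le> sqrt (gauss_expect (\<lambda>x. (f x - g x)^2))"
    unfolding gauss_expect_def by (intro sqrt_integral_square_diff_le) auto
  also have "gauss_expect (\<lambda>x. (f x - g x)^2) \<le> 2 * K^2 + 2 * K^2"
  proof (rule gauss_expect_le_quadratic)
    show "integrable std_normal (\<lambda>x. (f x - g x)^2)"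
    proof (rule integrable_std_normal_bounded[of _ "(2 * B)^2"])
      show "\<bar>(f x - g x)^2\<bar> \<le> (2 * B)^2" for x
        using assms(3,4)[of x] by (intro square_bound) linarith
    qed simp
    fix x :: real
    have "(f x - g x)^2 \<le> (K * (1 + \<bar>x\<bar>))^2"
      using square_bound[OF diff[of x]] by simp
    also have "\<dots> = K^2 * (1 + \<bar>x\<bar>)^2" by (simp add: power_mult_distrib)
    also have "\<dots> \<le> K^2 * (2 + 2 * x^2)"
      using sum_squares_bound[of "\<bar>x\<bar>" 1]
      by (intro mult_left_mono) (auto simp: power2_eq_square algebra_simps)
    also have "\<dots> = 2 * K^2 + 2 * K^2 * x^2" by (simp add: algebra_simps)
    finally show "(f x - g x)^2 \<le> 2 * K^2 + 2 * K^2 * x^2" .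
  qed
  finally show ?thesis using diff[of 0] by (simp add: real_sqrt_mult)
qed

section \<open>Spin means\<close>

definition spin_mean :: "nat \<Rightarrow> (int \<Rightarrow> real) \<Rightarrow> real \<Rightarrow> real \<Rightarrow> real" where
  "spin_mean S f y T = gibbs_mean {-int S..int S} (\<lambda>k. of_int k * y + (of_int k)^2 * T) f"

lemma spin_abs_le: "\<bar>k\<bar> \<le> int S \<Longrightarrow> \<bar>real_of_int k\<bar> \<le> real S"
  by linarith

lemma spin_square_abs_le: "\<bar>k\<bar> \<le> int S \<Longrightarrow> \<bar>(real_of_int k)^2\<bar> \<le> (real S)^2"
  using spin_abs_le by (simp add: power2_le_iff_abs_le)

lemma spin_mean_abs_le:
  "(\<And>k. \<bar>k\<bar> \<le> int S \<Longrightarrow> \<bar>f k\<bar> \<le> F) \<Longrightarrow> \<bar>spin_mean S f y T\<bar> \<le> F"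
  unfolding spin_mean_def by (rule gibbs_mean_abs_le) auto

lemma spin_mean_nonneg: "(\<And>k. f k \<ge> 0) \<Longrightarrow> spin_mean S f y T \<ge> 0"
  unfolding spin_mean_def by (rule gibbs_mean_nonneg)

lemma spin_mean_lipschitz:
  assumes "\<And>k. \<bar>k\<bar> \<le> int S \<Longrightarrow> \<bar>f k\<bar> \<le> F"
  shows "\<bar>spin_mean S f y1 T1 - spin_mean S f y2 T2\<bar>
    \<le> 2 * F * real S * \<bar>y1 - y2\<bar> + 2 * F * (real S)^2 * \<bar>T1 - T2\<bar>"
proof -
  have K: "finite {-int S..int S}" "{-int S..int S} \<noteq> {}" by auto
  have f: "\<bar>f k\<bar> \<le> F" and spin: "\<bar>of_int k\<bar> \<le> real S" and spin_sq: "\<bar>(of_int k)^2\<bar> \<le> (real S)^2"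
    if "k \<in> {-int S..int S}" for k
    using that assms[of k] spin_abs_le[of k S] spin_square_abs_le[of k S] by auto
  have "\<bar>spin_mean S f y1 T1 - spin_mean S f y2 T1\<bar> \<le> 2 * F * real S * \<bar>y1 - y2\<bar>"
    unfolding spin_mean_def by (rule gibbs_mean_lipschitz[OF K f spin])
  moreover have "\<bar>spin_mean S f y2 T1 - spin_mean S f y2 T2\<bar> \<le> 2 * F * (real S)^2 * \<bar>T1 - T2\<bar>"
    using gibbs_mean_lipschitz[OF K f spin_sq, where d="\<lambda>k. of_int k * y2" and s=T1 and t=T2]
    unfolding spin_mean_def by (simp add: add.commute)
  ultimately show ?thesis by linarith
qed

lemma sum_symmetric_int_interval:
  "(\<Sum>k\<in>{-int n..int n}. g k) = g 0 + (\<Sum>\<gamma>=1..n. g (int \<gamma>) + g (- int \<gamma>))"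
proof (induction n)
  case (Suc n)
  have "{-int (Suc n)..int (Suc n)} = insert (int n + 1) (insert (- (int n + 1)) {-int n..int n})"
    by auto
  with Suc show ?case by (simp add: algebra_simps)
qed simp

lemma denom_eq_partition_function:
  "denom S \<beta> h D p q x = (\<Sum>k\<in>{-int S..int S}.
     exp (of_int k * (sqrt q * \<beta> * x + h) + (of_int k)^2 * (D + \<beta>^2 / 2 * (p - q))))"
  unfolding denom_def sum_symmetric_int_interval ew_def cosh_field_def
  by (simp add: exp_add[symmetric] algebra_simps add_divide_distrib)

lemma numP_div_denom:
  "numP S \<beta> h D p q x / denom S \<beta> h D p q x
    = spin_mean S (\<lambda>k. (of_int k)^2) (sqrt q * \<beta> * x + h) (D + \<beta>^2 / 2 * (p - q))"
  unfolding spin_mean_def gibbs_mean_def denom_eq_partition_function numP_def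
    sum_symmetric_int_interval ew_def cosh_field_def
  by (simp add: exp_add[symmetric] algebra_simps add_divide_distrib)

lemma numQ_div_denom:
  "numQ S \<beta> h D p q x / denom S \<beta> h D p q x
    = spin_mean S of_int (sqrt q * \<beta> * x + h) (D + \<beta>^2 / 2 * (p - q))"
  unfolding spin_mean_def gibbs_mean_def denom_eq_partition_function numQ_def
    sum_symmetric_int_interval ew_def sinh_field_def
  by (simp add: exp_add[symmetric] algebra_simps diff_divide_distrib)

section \<open>The order-parameter map\<close>

definition site_mean :: "nat \<Rightarrow> (int \<Rightarrow> real) \<Rightarrow> real \<Rightarrow> real \<Rightarrow> real \<Rightarrow> real \<Rightarrow> real \<Rightarrow> real \<Rightarrow> real" where
  "site_mean S f \<beta> h D p r x = spin_mean S f (r * \<beta> * x + h) (D + \<beta>^2 / 2 * (p - r^2))"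

lemma site_mean_measurable [measurable]: "site_mean S f \<beta> h D p r \<in> borel_measurable borel"
  unfolding site_mean_def[abs_def] spin_mean_def gibbs_mean_def by simp

lemma site_mean_spin_abs_le: "\<bar>site_mean S of_int \<beta> h D p r x\<bar> \<le> real S"
  unfolding site_mean_def by (rule spin_mean_abs_le) (rule spin_abs_le)

lemma site_mean_spin_square_abs_le: "\<bar>site_mean S (\<lambda>k. (of_int k)^2) \<beta> h D p r x\<bar> \<le> (real S)^2"
  unfolding site_mean_def by (rule spin_mean_abs_le) (rule spin_square_abs_le)

lemma crystal_field_diff_le:
  assumes "S \<ge> 1" "0 \<le> \<beta>" "\<beta> \<le> 1" "r1 \<in> {0..real S}" "r2 \<in> {0..real S}"
  shows "\<bar>(D + \<beta>^2 / 2 * (p1 - r1^2)) - (D + \<beta>^2 / 2 * (p2 - r2^2))\<bar>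
    \<le> \<beta> * real S * (\<bar>p1 - p2\<bar> + \<bar>r1 - r2\<bar>)"
proof -
  define e where "e = \<bar>p1 - p2\<bar> + \<bar>r1 - r2\<bar>"
  have "(p1 - r1^2) - (p2 - r2^2) = (p1 - p2) - (r1 + r2) * (r1 - r2)"
    by (simp add: power2_eq_square algebra_simps)
  then have "\<bar>(p1 - r1^2) - (p2 - r2^2)\<bar> \<le> \<bar>p1 - p2\<bar> + (r1 + r2) * \<bar>r1 - r2\<bar>"
    using assms(4,5) abs_triangle_ineq4[of "p1 - p2" "(r1 + r2) * (r1 - r2)"] by (simp add: abs_mult)
  also have "\<dots> \<le> 2 * real S * \<bar>p1 - p2\<bar> + 2 * real S * \<bar>r1 - r2\<bar>"
  proof (intro add_mono mult_right_mono)
    show "\<bar>p1 - p2\<bar> \<le> 2 * real S * \<bar>p1 - p2\<bar>"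
      using assms(1) mult_right_mono[of 1 "2 * real S" "\<bar>p1 - p2\<bar>"] by simp
    show "r1 + r2 \<le> 2 * real S" using assms(4,5) by simp
  qed simp
  also have "\<dots> = 2 * real S * e" by (simp add: e_def algebra_simps)
  finally have bound: "\<bar>(p1 - r1^2) - (p2 - r2^2)\<bar> \<le> 2 * real S * e" .
  have diff_eq: "(D + \<beta>^2 / 2 * (p1 - r1^2)) - (D + \<beta>^2 / 2 * (p2 - r2^2))
      = \<beta>^2 / 2 * ((p1 - r1^2) - (p2 - r2^2))"
    by (simp add: right_diff_distrib)
  have "\<bar>(D + \<beta>^2 / 2 * (p1 - r1^2)) - (D + \<beta>^2 / 2 * (p2 - r2^2))\<bar>
      = \<beta>^2 / 2 * \<bar>(p1 - r1^2) - (p2 - r2^2)\<bar>"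
    unfolding diff_eq abs_mult by simp
  also have "\<dots> \<le> \<beta>^2 / 2 * (2 * real S * e)"
    using bound by (intro mult_left_mono) auto
  also have "\<dots> \<le> \<beta> * real S * e"
    using assms(2,3) by (simp add: e_def power2_eq_square mult_right_le_one_le mult.assoc mult_left_le_one_le)
  finally show ?thesis unfolding e_def .
qed

lemma site_mean_lipschitz:
  assumes "S \<ge> 1" "0 \<le> \<beta>" "\<beta> \<le> 1" "r1 \<in> {0..real S}" "r2 \<in> {0..real S}"
    and f: "\<And>k. \<bar>k\<bar> \<le> int S \<Longrightarrow> \<bar>f k\<bar> \<le> F"
  shows "\<bar>site_mean S f \<beta> h D p1 r1 x - site_mean S f \<beta> h D p2 r2 x\<bar>
    \<le> 2 * F * (real S)^3 * \<beta> * (\<bar>p1 - p2\<bar> + \<bar>r1 - r2\<bar>) * (1 + \<bar>x\<bar>)"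
proof -
  define e where "e = \<bar>p1 - p2\<bar> + \<bar>r1 - r2\<bar>"
  have "F \<ge> 0" using f[of 0] by simp
  have "e \<ge> 0" by (simp add: e_def)
  have "real S \<le> (real S)^3" using assms(1) by (simp add: power_increasing[of 1 3, simplified])
  have field: "\<bar>(r1 * \<beta> * x + h) - (r2 * \<beta> * x + h)\<bar> \<le> \<beta> * \<bar>x\<bar> * e"
  proof -
    have "(r1 * \<beta> * x + h) - (r2 * \<beta> * x + h) = \<beta> * x * (r1 - r2)"
      by (simp add: algebra_simps)
    then have "\<bar>(r1 * \<beta> * x + h) - (r2 * \<beta> * x + h)\<bar> = \<beta> * \<bar>x\<bar> * \<bar>r1 - r2\<bar>"
      using assms(2) by (simp add: abs_mult)
    also have "\<dots> \<le> \<beta> * \<bar>x\<bar> * e" using assms(2) by (intro mult_left_mono) (auto simp: e_def)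
    finally show ?thesis .
  qed
  have crystal_field: "\<bar>(D + \<beta>^2 / 2 * (p1 - r1^2)) - (D + \<beta>^2 / 2 * (p2 - r2^2))\<bar> \<le> \<beta> * real S * e"
    unfolding e_def by (rule crystal_field_diff_le[OF assms(1-5)])
  have "\<bar>site_mean S f \<beta> h D p1 r1 x - site_mean S f \<beta> h D p2 r2 x\<bar>
      \<le> 2 * F * real S * \<bar>(r1 * \<beta> * x + h) - (r2 * \<beta> * x + h)\<bar>
        + 2 * F * (real S)^2 * \<bar>(D + \<beta>^2 / 2 * (p1 - r1^2)) - (D + \<beta>^2 / 2 * (p2 - r2^2))\<bar>"
    unfolding site_mean_def by (rule spin_mean_lipschitz) (rule f)
  also have "\<dots> \<le> 2 * F * real S * (\<beta> * \<bar>x\<bar> * e) + 2 * F * (real S)^2 * (\<beta> * real S * e)"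
    using \<open>F \<ge> 0\<close> field crystal_field by (intro add_mono mult_left_mono) auto
  also have "\<dots> \<le> 2 * F * (real S)^3 * \<beta> * e * \<bar>x\<bar> + 2 * F * (real S)^3 * \<beta> * e"
    using \<open>real S \<le> (real S)^3\<close> \<open>F \<ge> 0\<close> \<open>e \<ge> 0\<close> assms(2)
    by (simp add: power2_eq_square power3_eq_cube mult_left_mono mult_right_mono ac_simps)
  finally show ?thesis by (simp add: e_def algebra_simps)
qed

definition order_parameter_map :: "nat \<Rightarrow> real \<Rightarrow> real \<Rightarrow> real \<Rightarrow> real \<times> real \<Rightarrow> real \<times> real" where
  "order_parameter_map S \<beta> h D = (\<lambda>(p, r).
     (gauss_expect (site_mean S (\<lambda>k. (of_int k)^2) \<beta> h D p r),
      sqrt (gauss_expect (\<lambda>x. (site_mean S of_int \<beta> h D p r x)^2))))"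

lemma order_parameter_map_in_box:
  "order_parameter_map S \<beta> h D z \<in> {0..(real S)^2} \<times> {0..real S}"
proof -
  obtain p r where z: "z = (p, r)" by (cases z)
  interpret prob_space std_normal by (rule prob_space_std_normal)
  have "0 \<le> gauss_expect (site_mean S (\<lambda>k. (of_int k)^2) \<beta> h D p r)"
    unfolding gauss_expect_def site_mean_def by (intro integral_nonneg_AE AE_I2 spin_mean_nonneg) simp
  moreover have "gauss_expect (site_mean S (\<lambda>k. (of_int k)^2) \<beta> h D p r) \<le> (real S)^2"
    unfolding gauss_expect_def using site_mean_spin_square_abs_le
    by (intro integral_le_const integrable_std_normal_bounded[of _ "(real S)^2"]) (auto simp: abs_le_iff)
  moreover have "0 \<le> gauss_expect (\<lambda>x. (site_mean S of_int \<beta> h D p r x)^2)"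
    unfolding gauss_expect_def by (intro integral_nonneg_AE AE_I2) simp
  moreover have "gauss_expect (\<lambda>x. (site_mean S of_int \<beta> h D p r x)^2) \<le> (real S)^2"
    unfolding gauss_expect_def using site_mean_spin_abs_le
    by (intro integral_le_const integrable_std_normal_bounded[of _ "(real S)^2"])
       (auto simp: power2_le_iff_abs_le)
  then have "sqrt (gauss_expect (\<lambda>x. (site_mean S of_int \<beta> h D p r x)^2)) \<le> real S"
    by (simp add: real_sqrt_le_iff real_le_lsqrt)
  ultimately show ?thesis by (simp add: z order_parameter_map_def)
qed

lemma order_parameter_map_contraction:
  assumes "S \<ge> 1" "0 \<le> \<beta>" "\<beta> \<le> 1"
    and z1: "z1 \<in> {0..(real S)^2} \<times> {0..real S}" and z2: "z2 \<in> {0..(real S)^2} \<times> {0..real S}"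
  shows "dist (order_parameter_map S \<beta> h D z1) (order_parameter_map S \<beta> h D z2)
    \<le> 16 * (real S)^5 * \<beta> * dist z1 z2"
proof -
  obtain p1 r1 p2 r2 where z: "z1 = (p1, r1)" "z2 = (p2, r2)" by (cases z1, cases z2)
  have r: "r1 \<in> {0..real S}" "r2 \<in> {0..real S}" using z1 z2 z by auto
  define e where "e = \<bar>p1 - p2\<bar> + \<bar>r1 - r2\<bar>"
  define \<Phi> where "\<Phi> = order_parameter_map S \<beta> h D"
  have "(real S)^4 \<le> (real S)^5" using assms(1) by (simp add: power_increasing)
  have first: "\<bar>fst (\<Phi> z1) - fst (\<Phi> z2)\<bar> \<le> 4 * (real S)^5 * \<beta> * e"
  proof -
    have "\<bar>fst (\<Phi> z1) - fst (\<Phi> z2)\<bar> \<le> 2 * (2 * (real S)^2 * (real S)^3 * \<beta> * e)"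
      unfolding \<Phi>_def order_parameter_map_def z prod.case fst_conv
    proof (rule gauss_expect_diff_le)
      show "\<bar>site_mean S (\<lambda>k. (of_int k)^2) \<beta> h D p1 r1 x - site_mean S (\<lambda>k. (of_int k)^2) \<beta> h D p2 r2 x\<bar>
          \<le> 2 * (real S)^2 * (real S)^3 * \<beta> * e * (1 + \<bar>x\<bar>)" for x
        unfolding e_def by (rule site_mean_lipschitz[OF assms(1-3) r spin_square_abs_le])
    qed (auto intro!: integrable_std_normal_bounded site_mean_spin_square_abs_le)
    then show ?thesis by (simp add: power_add[symmetric])
  qed
  have second: "\<bar>snd (\<Phi> z1) - snd (\<Phi> z2)\<bar> \<le> 4 * (real S)^5 * \<beta> * e"
  proof -
    have "\<bar>snd (\<Phi> z1) - snd (\<Phi> z2)\<bar> \<le> 2 * (2 * real S * (real S)^3 * \<beta> * e)"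
      unfolding \<Phi>_def order_parameter_map_def z prod.case snd_conv
    proof (rule gauss_rms_diff_le)
      show "\<bar>site_mean S of_int \<beta> h D p1 r1 x - site_mean S of_int \<beta> h D p2 r2 x\<bar>
          \<le> 2 * real S * (real S)^3 * \<beta> * e * (1 + \<bar>x\<bar>)" for x
        unfolding e_def by (rule site_mean_lipschitz[OF assms(1-3) r spin_abs_le])
    qed (auto intro!: site_mean_spin_abs_le)
    also have "\<dots> = 4 * (real S)^4 * (\<beta> * e)" by (simp add: eval_nat_numeral)
    also have "\<dots> \<le> 4 * (real S)^5 * (\<beta> * e)"
      using \<open>(real S)^4 \<le> (real S)^5\<close> assms(2) by (intro mult_right_mono) (auto simp: e_def)
    finally show ?thesis by (simp add: ac_simps)
  qed
  have "\<bar>p1 - p2\<bar> \<le> dist z1 z2" "\<bar>r1 - r2\<bar> \<le> dist z1 z2"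
    unfolding z dist_Pair_Pair dist_real_def by simp_all
  then have "e \<le> 2 * dist z1 z2" by (simp add: e_def)
  have "dist (\<Phi> z1) (\<Phi> z2) \<le> \<bar>fst (\<Phi> z1) - fst (\<Phi> z2)\<bar> + \<bar>snd (\<Phi> z1) - snd (\<Phi> z2)\<bar>"
    using dist_Pair_Pair[of "fst (\<Phi> z1)" "snd (\<Phi> z1)" "fst (\<Phi> z2)" "snd (\<Phi> z2)"]
    by (simp add: dist_real_def sqrt_sum_squares_le_sum_abs)
  also have "\<dots> \<le> 8 * (real S)^5 * \<beta> * e" using first second by simp
  also have "\<dots> \<le> 8 * (real S)^5 * \<beta> * (2 * dist z1 z2)"
    using \<open>e \<le> 2 * dist z1 z2\<close> assms(2) by (intro mult_left_mono) auto
  finally show ?thesis unfolding \<Phi>_def by simp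
qed

lemma self_consistency_iff_fixed_point:
  "(0 \<le> q \<and> p = gauss_expect (\<lambda>x. numP S \<beta> h D p q x / denom S \<beta> h D p q x) \<and>
      q = gauss_expect (\<lambda>x. (numQ S \<beta> h D p q x / denom S \<beta> h D p q x)^2))
    \<longleftrightarrow> 0 \<le> q \<and> order_parameter_map S \<beta> h D (p, sqrt q) = (p, sqrt q)"
proof (cases "0 \<le> q")
  case True
  have "(\<lambda>x. numP S \<beta> h D p q x / denom S \<beta> h D p q x) = site_mean S (\<lambda>k. (of_int k)^2) \<beta> h D p (sqrt q)"
    and "(\<lambda>x. (numQ S \<beta> h D p q x / denom S \<beta> h D p q x)^2) = (\<lambda>x. (site_mean S of_int \<beta> h D p (sqrt q) x)^2)"
    using True by (simp_all add: fun_eq_iff site_mean_def numP_div_denom numQ_div_denom)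
  moreover have "0 \<le> gauss_expect (\<lambda>x. (site_mean S of_int \<beta> h D p (sqrt q) x)^2)"
    unfolding gauss_expect_def by (intro integral_nonneg_AE AE_I2) simp
  ultimately show ?thesis
    using True by (auto simp: order_parameter_map_def real_sqrt_eq_iff)
qed simp

theorem proposition1:
  fixes S :: nat
  assumes "S \<ge> 1"
  shows "\<exists>\<beta>t>0. \<forall>\<beta> h D. 0 \<le> \<beta> \<and> \<beta> < \<beta>t \<and> 0 \<le> h \<longrightarrow>
           (\<exists>!(p, q). 0 \<le> q \<and>
              p = gauss_expect (\<lambda>x. numP S \<beta> h D p q x / denom S \<beta> h D p q x) \<and>
              q = gauss_expect (\<lambda>x. (numQ S \<beta> h D p q x / denom S \<beta> h D p q x)^2))"
proof (intro exI[of _ "1 / (16 * (real S)^5)"] conjI allI impI)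
  have "(real S)^5 \<ge> 1" using assms by simp
  then show "1 / (16 * (real S)^5) > 0" using assms by simp
  fix \<beta> h D :: real
  assume "0 \<le> \<beta> \<and> \<beta> < 1 / (16 * (real S)^5) \<and> 0 \<le> h"
  \<comment> \<open>All estimates are uniform in h and D.\<close>
  then have "0 \<le> \<beta>" and "16 * (real S)^5 * \<beta> < 1"
    using assms by (auto simp: less_divide_eq algebra_simps)
  moreover have "\<beta> \<le> (real S)^5 * \<beta>"
    using mult_right_mono[OF \<open>(real S)^5 \<ge> 1\<close> \<open>0 \<le> \<beta>\<close>] by simp
  ultimately have "\<beta> \<le> 1" by linarith
  have "\<exists>!z. order_parameter_map S \<beta> h D z = z"
  proof (rule ex1_fixed_point_if_contraction_into[where c = "16 * (real S)^5 * \<beta>"])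
    show "Topological_Spaces.complete ({0..(real S)^2} \<times> {0..real S})"
      by (intro compact_imp_complete compact_Times compact_Icc)
    show "range (order_parameter_map S \<beta> h D) \<subseteq> {0..(real S)^2} \<times> {0..real S}"
      using order_parameter_map_in_box by blast
  qed (use \<open>0 \<le> \<beta>\<close> \<open>16 * (real S)^5 * \<beta> < 1\<close> order_parameter_map_contraction[OF assms \<open>0 \<le> \<beta>\<close> \<open>\<beta> \<le> 1\<close>]
      in auto)
  then show "\<exists>!(p, q). 0 \<le> q \<and>
      p = gauss_expect (\<lambda>x. numP S \<beta> h D p q x / denom S \<beta> h D p q x) \<and>
      q = gauss_expect (\<lambda>x. (numQ S \<beta> h D p q x / denom S \<beta> h D p q x)^2)"
    unfolding self_consistency_iff_fixed_point
    by (rule ex1_fixed_point_sqrt_reparametrisation)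
      (use order_parameter_map_in_box in \<open>auto simp: mem_Times_iff\<close>)
qed

end
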